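(* Let $p\ge1$, $\phi_1,\dots,\phi_p:\mathbb Z\to\mathbb C$, $v:\mathbb Z\to\mathbb C$, $s\in\mathbb Z$, and let $y:\{s-p+1,s-p+2,\dots\}\to\mathbb C$ satisfy $y_t=\sum_{l=1}^p\phi_l(t)y_{t-l}+v_t$ for all $t\ge s+1$. Then for all $t>s$, $$y_t=\sum_{m=1}^{p}\sum_{j=1}^{p-m+1}\phi_{m+j-1}(s+j)\,H(t,s+j)\,y_{s-m+1}+\sum_{j=1}^{t-s}H(t,s+j)\,v_{s+j}.$$
   Context: $\Gamma_t$ is the $p\times p$ companion matrix with first row $(\phi_1(t),\dots,\phi_p(t))$, entries $(i,i-1)$ equal to $1$ for $2\le i\le p$, other entries $0$. The Green's function is defined for integers $u$ and $t\ge u-p+1$ by: $H(t,u)$ is the $(1,1)$ entry of $\Gamma_t\Gamma_{t-1}\cdots\Gamma_{u+1}$ if $t>u$; $H(u,u)=1$; $H(t,u)=0$ if $u-p+1\le t<u$. *)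

theory Defs
  imports Complex_Main "Jordan_Normal_Form.Matrix"
begin

definition companion :: "nat \<Rightarrow> (nat \<Rightarrow> int \<Rightarrow> complex) \<Rightarrow> int \<Rightarrow> complex mat" where
  "companion p \<phi> t = mat p p (\<lambda>(i, j). if i = 0 then \<phi> (j + 1) t
                                        else if i = j + 1 then 1 else 0)"

fun gprod :: "nat \<Rightarrow> (nat \<Rightarrow> int \<Rightarrow> complex) \<Rightarrow> int \<Rightarrow> nat \<Rightarrow> complex mat" where
  "gprod p \<phi> t 0 = 1\<^sub>m p"
| "gprod p \<phi> t (Suc k) = companion p \<phi> t * gprod p \<phi> (t - 1) k"

text \<open>Green's function: H(t,u) = (1,1) entry of Gamma_t ... Gamma_(u+1) if t > u,
  H(u,u) = 1, and 0 if t < u (the paper only uses u-p+1 <= t < u).\<close>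
definition green :: "nat \<Rightarrow> (nat \<Rightarrow> int \<Rightarrow> complex) \<Rightarrow> int \<Rightarrow> int \<Rightarrow> complex" where
  "green p \<phi> t u = (if t > u then gprod p \<phi> t (nat (t - u)) $$ (0, 0)
                     else if t = u then 1 else 0)"

end

theory Submission
  imports Defs
begin

text \<open>Multiplying by the companion matrix \<open>\<Gamma>\<^sub>t\<close> shifts a column down and puts the
  \<open>\<phi>(t)\<close>-combination of its entries on top, so the first column of \<open>\<Gamma>\<^sub>t\<cdots>\<Gamma>\<^sub>u\<^sub>+\<^sub>1\<close> is
  \<open>(H(t,u), H(t-1,u), \<dots>, H(t-p+1,u))\<close>. Reading off its top entry gives
  \<open>H(t,u) = \<Sum>\<^sub>l \<phi>\<^sub>l(t) H(t-l,u)\<close> for \<open>t > u\<close>, hence the Green's sum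
  \<open>\<Sum>\<^sub>j H(t,s+j) f(s+j)\<close> solves the recurrence with forcing \<open>f\<close> and zero values up to \<open>s\<close>.
  Setting the initial values of \<open>y\<close> to zero moves their contribution
  \<open>\<Sum>\<^bsub>l \<ge> t-s\<^esub> \<phi>\<^sub>l(t) y(t-l)\<close> into the forcing at times \<open>s+1, \<dots>, s+p\<close>; uniqueness of solutions
  and reindexing this triangular sum along its diagonals give the formula.\<close>

lemma companion_carrier_mat: "companion p \<phi> t \<in> carrier_mat p p"
  by (simp add: companion_def)

lemma gprod_carrier_mat: "gprod p \<phi> t k \<in> carrier_mat p p"
  by (induction k arbitrary: t) (auto intro: mult_carrier_mat companion_carrier_mat)

lemma index_companion_mult:
  assumes "B \<in> carrier_mat p n" "i < p" "j < n"
  shows "(companion p \<phi> t * B) $$ (i, j)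
       = (if i = 0 then (\<Sum>k<p. \<phi> (Suc k) t * B $$ (k, j)) else B $$ (i - 1, j))"
proof -
  have prod: "(companion p \<phi> t * B) $$ (i, j) = (\<Sum>k<p. companion p \<phi> t $$ (i, k) * B $$ (k, j))"
    using assms by (simp add: companion_def scalar_prod_def atLeast0LessThan)
  show ?thesis
  proof (cases "i = 0")
    case True
    then show ?thesis unfolding prod by (auto simp: companion_def intro!: sum.cong)
  next
    case False
    have "(\<Sum>k<p. companion p \<phi> t $$ (i, k) * B $$ (k, j))
        = (\<Sum>k<p. if k = i - 1 then B $$ (k, j) else 0)"
      using assms(2) False by (intro sum.cong) (auto simp: companion_def)
    then show ?thesis unfolding prod using assms(2) False by simp
  qed
qed

lemma gprod_first_column:
  assumes "i < p"
  shows "gprod p \<phi> t k $$ (i, 0) = green p \<phi> (t - int i) (t - int k)"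
  using assms
proof (induction k arbitrary: t i)
  case 0
  then show ?case by (simp add: green_def)
next
  case (Suc k)
  show ?case
  proof (cases "i = 0")
    case True
    have "nat (t - (t - int (Suc k))) = Suc k" by simp
    then show ?thesis using True by (simp add: green_def)
  next
    case False
    have "gprod p \<phi> t (Suc k) $$ (i, 0) = gprod p \<phi> (t - 1) k $$ (i - 1, 0)"
      using Suc.prems False by (simp add: index_companion_mult[OF gprod_carrier_mat])
    also have "\<dots> = green p \<phi> (t - int i) (t - int (Suc k))"
      using Suc.IH[of "i - 1" "t - 1"] Suc.prems False by (simp add: algebra_simps)
    finally show ?thesis .
  qed
qed

lemma green_recurrence:
  assumes "p \<ge> 1"
  shows "(\<Sum>l = 1..p. \<phi> l t * green p \<phi> (t - int l) u) = green p \<phi> t u - (if t = u then 1 else 0)"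
proof (cases "t > u")
  case True
  then obtain k where k: "nat (t - u) = Suc k"
    using gr0_implies_Suc by fastforce
  then have u: "u = t - 1 - int k" by linarith
  have "green p \<phi> t u = (companion p \<phi> t * gprod p \<phi> (t - 1) k) $$ (0, 0)"
    using True k by (simp add: green_def)
  also have "\<dots> = (\<Sum>i<p. \<phi> (Suc i) t * gprod p \<phi> (t - 1) k $$ (i, 0))"
    using assms by (simp add: index_companion_mult[OF gprod_carrier_mat])
  also have "\<dots> = (\<Sum>i<p. \<phi> (Suc i) t * green p \<phi> (t - int (Suc i)) u)"
    by (intro sum.cong refl) (simp add: gprod_first_column u algebra_simps)
  also have "\<dots> = (\<Sum>l = 1..p. \<phi> l t * green p \<phi> (t - int l) u)"
    by (simp add: sum.atLeast1_atMost_eq)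
  finally show ?thesis using True by simp
next
  case False
  then show ?thesis by (auto simp: green_def intro!: sum.neutral)
qed

definition green_sum :: "nat \<Rightarrow> (nat \<Rightarrow> int \<Rightarrow> complex) \<Rightarrow> int \<Rightarrow> (int \<Rightarrow> complex) \<Rightarrow> int \<Rightarrow> complex"
  where "green_sum p \<phi> s f t = (\<Sum>j = 1..nat (t - s). green p \<phi> t (s + int j) * f (s + int j))"

lemma green_sum_nonpos: "t \<le> s \<Longrightarrow> green_sum p \<phi> s f t = 0"
  by (simp add: green_sum_def)

lemma green_sum_eq_sum_upto:
  assumes "\<forall>j \<in> {M<..nat (t - s)}. f (s + int j) = 0"
  shows "green_sum p \<phi> s f t = (\<Sum>j = 1..M. green p \<phi> t (s + int j) * f (s + int j))"
proof -
  let ?g = "\<lambda>j. green p \<phi> t (s + int j) * f (s + int j)"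
  have "green_sum p \<phi> s f t = sum ?g {1..max M (nat (t - s))}"
    unfolding green_sum_def by (rule sum.mono_neutral_left) (auto simp: green_def)
  also have "\<dots> = sum ?g {1..M}"
    using assms by (intro sum.mono_neutral_right) (auto simp: green_def)
  finally show ?thesis .
qed

lemma green_sum_recurrence:
  assumes "p \<ge> 1" "t > s"
  shows "green_sum p \<phi> s f t = (\<Sum>l = 1..p. \<phi> l t * green_sum p \<phi> s f (t - int l)) + f t"
proof -
  define N where "N = nat (t - s)"
  have t: "t = s + int N" and N: "N \<ge> 1" using assms(2) by (auto simp: N_def)
  have shifted: "green_sum p \<phi> s f (t - int l) = (\<Sum>j = 1..N. green p \<phi> (t - int l) (s + int j) * f (s + int j))"
    for l by (rule green_sum_eq_sum_upto) (auto simp: N_def)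
  have "(\<Sum>l = 1..p. \<phi> l t * green_sum p \<phi> s f (t - int l))
      = (\<Sum>j = 1..N. f (s + int j) * (\<Sum>l = 1..p. \<phi> l t * green p \<phi> (t - int l) (s + int j)))"
    unfolding shifted sum_distrib_left by (subst sum.swap) (simp add: mult_ac)
  also have "\<dots> = (\<Sum>j = 1..N. f (s + int j) * green p \<phi> t (s + int j))
                 - (\<Sum>j = 1..N. f (s + int j) * (if t = s + int j then 1 else 0))"
    unfolding green_recurrence[OF assms(1)] by (simp add: right_diff_distrib sum_subtractf)
  also have "(\<Sum>j = 1..N. f (s + int j) * (if t = s + int j then 1 else 0))
           = (\<Sum>j = 1..N. if j = N then f t else 0)"
    by (intro sum.cong) (auto simp: t)
  also have "\<dots> = f t"
    using N by simp
  finally show ?thesis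
    by (simp add: green_sum_def N_def mult.commute)
qed

lemma recurrence_solution_unique:
  fixes x z :: "int \<Rightarrow> 'a::semiring_0"
  assumes "\<forall>t \<le> s. x t = z t"
    and "\<forall>t > s. x t = (\<Sum>l = 1..p. \<phi> l t * x (t - int l)) + f t"
    and "\<forall>t > s. z t = (\<Sum>l = 1..p. \<phi> l t * z (t - int l)) + f t"
  shows "x t = z t"
proof (induction "nat (t - s)" arbitrary: t rule: less_induct)
  case less
  show ?case
  proof (cases "t > s")
    case True
    have "(\<Sum>l = 1..p. \<phi> l t * x (t - int l)) = (\<Sum>l = 1..p. \<phi> l t * z (t - int l))"
      using less True by (intro sum.cong) auto
    then show ?thesis using True assms(2,3) by simp
  next
    case False
    then show ?thesis using assms(1) by simp
  qed
qed

lemma sum_upper_triangle_by_diagonals: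
  fixes a :: "nat \<Rightarrow> nat \<Rightarrow> 'a::comm_monoid_add"
  shows "(\<Sum>j = 1..p. \<Sum>l = 1..p. if j \<le> l then a j l else 0)
       = (\<Sum>m = 1..p. \<Sum>j = 1..p - m + 1. a j (m + j - 1))"
proof -
  have row: "(\<Sum>l = 1..p. if j \<le> l then a j l else 0) = (\<Sum>l = j..p. a j l)" if "j \<ge> 1" for j
  proof -
    have "{l \<in> {1..p}. j \<le> l} = {j..p}" using that by auto
    then show ?thesis using sum.inter_filter[of "{1..p}" "a j" "\<lambda>l. j \<le> l"] by simp
  qed
  have "(\<Sum>j = 1..p. \<Sum>l = 1..p. if j \<le> l then a j l else 0) = (\<Sum>j = 1..p. \<Sum>l = j..p. a j l)"
    by (rule sum.cong, rule refl, rule row) simp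
  also have "\<dots> = (\<Sum>(j, l) \<in> Sigma {1..p} (\<lambda>j. {j..p}). a j l)"
    by (rule sum.Sigma) auto
  also have "\<dots> = (\<Sum>(m, j) \<in> Sigma {1..p} (\<lambda>m. {1..p - m + 1}). a j (m + j - 1))"
    by (rule sum.reindex_bij_witness[where i = "\<lambda>(m, j). (j, m + j - 1)" and j = "\<lambda>(j, l). (l - j + 1, j)"])
      auto
  also have "\<dots> = (\<Sum>m = 1..p. \<Sum>j = 1..p - m + 1. a j (m + j - 1))"
    by (rule sum.Sigma[symmetric]) auto
  finally show ?thesis .
qed

lemma green_sum_initial_values:
  "green_sum p \<phi> s (\<lambda>u. \<Sum>l = 1..p. if u - int l \<le> s then \<phi> l u * y (u - int l) else 0) t
 = (\<Sum>m = 1..p. \<Sum>j = 1..p - m + 1.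
      \<phi> (m + j - 1) (s + int j) * green p \<phi> t (s + int j) * y (s - int m + 1))"
proof -
  have "green_sum p \<phi> s (\<lambda>u. \<Sum>l = 1..p. if u - int l \<le> s then \<phi> l u * y (u - int l) else 0) t
      = (\<Sum>j = 1..p. green p \<phi> t (s + int j) *
           (\<Sum>l = 1..p. if j \<le> l then \<phi> l (s + int j) * y (s + int j - int l) else 0))"
    by (subst green_sum_eq_sum_upto[where M = p]) auto
  also have "\<dots> = (\<Sum>j = 1..p. \<Sum>l = 1..p.
      if j \<le> l then green p \<phi> t (s + int j) * \<phi> l (s + int j) * y (s + int j - int l) else 0)"
    by (simp add: sum_distrib_left if_distrib mult.assoc cong: if_cong)
  also have "\<dots> = (\<Sum>m = 1..p. \<Sum>j = 1..p - m + 1.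
      green p \<phi> t (s + int j) * \<phi> (m + j - 1) (s + int j) * y (s + int j - int (m + j - 1)))"
    by (rule sum_upper_triangle_by_diagonals)
  also have "\<dots> = (\<Sum>m = 1..p. \<Sum>j = 1..p - m + 1.
      \<phi> (m + j - 1) (s + int j) * green p \<phi> t (s + int j) * y (s - int m + 1))"
    by (intro sum.cong refl) (simp add: algebra_simps)
  finally show ?thesis .
qed

theorem mainTheorem13:
  fixes p :: nat and \<phi> :: "nat \<Rightarrow> int \<Rightarrow> complex" and v y :: "int \<Rightarrow> complex" and s :: int
  assumes "p \<ge> 1"
    and rec: "\<And>t. t \<ge> s + 1 \<Longrightarrow> y t = (\<Sum>l = 1..p. \<phi> l t * y (t - int l)) + v t"
  shows "\<forall>t > s. y t =
           (\<Sum>m = 1..p. \<Sum>j = 1..p - m + 1.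
               \<phi> (m + j - 1) (s + int j) * green p \<phi> t (s + int j) * y (s - int m + 1))
         + (\<Sum>j = 1..nat (t - s). green p \<phi> t (s + int j) * v (s + int j))"
proof (intro allI impI)
  fix t assume "t > s"
  define y\<^sub>0 where "y\<^sub>0 u = (if u > s then y u else 0)" for u
  define g where "g u = (\<Sum>l = 1..p. if u - int l \<le> s then \<phi> l u * y (u - int l) else 0)" for u
  have "y\<^sub>0 u = (\<Sum>l = 1..p. \<phi> l u * y\<^sub>0 (u - int l)) + (v u + g u)" if "u > s" for u
    using rec[of u] that by (simp add: y\<^sub>0_def g_def sum.distrib[symmetric] if_distrib algebra_simps cong: if_cong)
  then have "y\<^sub>0 t = green_sum p \<phi> s (\<lambda>u. v u + g u) t"
    using green_sum_recurrence[OF assms(1)] green_sum_nonpos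
    by (intro recurrence_solution_unique[where s = s]) (auto simp: y\<^sub>0_def)
  then show "y t = (\<Sum>m = 1..p. \<Sum>j = 1..p - m + 1.
               \<phi> (m + j - 1) (s + int j) * green p \<phi> t (s + int j) * y (s - int m + 1))
         + (\<Sum>j = 1..nat (t - s). green p \<phi> t (s + int j) * v (s + int j))"
    using \<open>t > s\<close> green_sum_initial_values[of p \<phi> s y t, folded g_def]
    by (simp add: y\<^sub>0_def green_sum_def distrib_left sum.distrib)
qed

end
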